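(* Let $f$ be analytic on the unit disk $\mathbb{D}=\{z\in\mathbb{C}:|z|<1\}$ with $\operatorname{Diam} f(\mathbb{D})\le 2$. Then $|f'(0)|\le 1$. Moreover, $|f'(0)|=1$ if and only if $f(z)=a+cz$ for all $z\in\mathbb{D}$, for some constants $a,c\in\mathbb{C}$ with $|c|=1$.
   Context: For a set $E\subset\mathbb{C}$, $\operatorname{Diam}E=\sup_{z,w\in E}|z-w|$. *)

theory Defs
  imports "HOL-Complex_Analysis.Complex_Analysis"
begin

text \<open>Diameter of a set of complex numbers as an extended real: sup of |z - w| over z, w in E
  (equals infinity for unbounded E, and bottom for the empty set).\<close>
definition Diam :: "complex set \<Rightarrow> ereal" where
  "Diam E = (SUP z\<in>E. SUP w\<in>E. ereal (cmod (z - w)))"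

end

theory Submission
  imports Defs
begin

(* The odd part g z = (f z - f (-z)) / 2 maps the unit disc into itself, fixes 0 and has
   g'(0) = f'(0), so the Schwarz lemma gives |f'(0)| <= 1, and g z = c z with c = f'(0) when
   |f'(0)| = 1. In that case, for fixed z, the curve t |-> f z - f (-e^(it) z) stays in the closed
   disc of radius 2|z| (the same Schwarz argument with -e^(it) in place of -1) and meets its
   boundary at t = 0, so it is tangent to the circle there. Tangency says that conj c * f'(-z) is
   real; a real-valued holomorphic function is constant by the open mapping theorem, so f' = c
   and f is affine. *)

lemma Schwarz_Lemma_norm_le:
  fixes h :: "complex \<Rightarrow> complex"
  assumes hol: "h holomorphic_on ball 0 1" and h0: "h 0 = 0"
    and bound: "\<And>z. z \<in> ball 0 1 \<Longrightarrow> cmod (h z) \<le> M"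
    and z: "z \<in> ball 0 1"
  shows "cmod (h z) \<le> M * cmod z"
proof (cases "M > 0")
  case False
  have "0 \<le> cmod (h z)" by simp
  then have "M = 0" using bound[OF z] False by linarith
  then show ?thesis using bound[OF z] by simp
next
  case True
  have "t * (cmod (h z) / M) \<le> cmod z" if t: "0 < t" "t < 1" for t :: real
  proof -
    let ?k = "\<lambda>w. of_real (t / M) * h w"
    have hol_k: "?k holomorphic_on ball 0 1" using hol by (intro holomorphic_intros)
    have k_lt: "cmod (?k w) < 1" if "cmod w < 1" for w
    proof -
      have "cmod (?k w) = t * (cmod (h w) / M)" using True t by (simp add: norm_mult norm_divide)
      also have "\<dots> \<le> t" by (intro mult_left_le) (use bound[of w] that True t in auto)
      finally show ?thesis using t by linarith
    qed
    have "cmod (?k z) \<le> cmod z" using Schwarz_Lemma(1)[OF hol_k _ k_lt] h0 z by simp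
    then show ?thesis using True t by (simp add: norm_mult norm_divide)
  qed
  then have "cmod (h z) / M \<le> cmod z" by (rule field_le_mult_one_interval)
  then show ?thesis using True by (simp add: divide_le_eq mult.commute)
qed

lemma norm_diff_le_Diam:
  assumes "z \<in> E" "w \<in> E"
  shows "ereal (cmod (z - w)) \<le> Diam E"
proof -
  have "ereal (cmod (z - w)) \<le> (SUP w'\<in>E. ereal (cmod (z - w')))"
    using assms by (intro SUP_upper)
  also have "\<dots> \<le> Diam E"
    unfolding Diam_def using assms by (intro SUP_upper)
  finally show ?thesis .
qed

lemma mult_mem_ball_0:
  fixes \<omega> :: "'a::real_normed_div_algebra"
  assumes "norm \<omega> \<le> 1" "u \<in> ball 0 r"
  shows "\<omega> * u \<in> ball 0 r"
proof -
  have "norm \<omega> * norm u \<le> norm u" using assms(1) by (simp add: mult_left_le_one_le)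
  then show ?thesis using assms(2) by (simp add: norm_mult)
qed

lemma holomorphic_on_ball_compose_mult:
  assumes hol: "f holomorphic_on ball 0 r" and \<omega>: "cmod \<omega> \<le> 1"
  shows "(\<lambda>u. f (\<omega> * u)) holomorphic_on ball 0 r"
proof -
  have "(*) \<omega> ` ball 0 r \<subseteq> ball 0 r" using mult_mem_ball_0[OF \<omega>] by blast
  with holomorphic_on_compose_gen[of "(*) \<omega>" "ball 0 r" f "ball 0 r"] hol show ?thesis
    by (simp add: o_def holomorphic_intros)
qed

lemma norm_diff_mult_le:
  fixes f :: "complex \<Rightarrow> complex"
  assumes hol: "f holomorphic_on ball 0 1"
    and diam: "\<And>u v. u \<in> ball 0 1 \<Longrightarrow> v \<in> ball 0 1 \<Longrightarrow> cmod (f u - f v) \<le> d"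
    and \<omega>: "cmod \<omega> \<le> 1" and z: "z \<in> ball 0 1"
  shows "cmod (f z - f (\<omega> * z)) \<le> d * cmod z"
proof (rule Schwarz_Lemma_norm_le[of "\<lambda>u. f u - f (\<omega> * u)", OF _ _ _ z])
  show "(\<lambda>u. f u - f (\<omega> * u)) holomorphic_on ball 0 1"
    using hol holomorphic_on_ball_compose_mult[OF hol \<omega>] by (intro holomorphic_intros)
  show "cmod (f u - f (\<omega> * u)) \<le> d" if "u \<in> ball 0 1" for u
    using diam[OF that mult_mem_ball_0[OF \<omega> that]] .
qed simp

lemma Re_cnj_mult_vector_derivative_eq_0:
  fixes \<Psi> :: "real \<Rightarrow> complex"
  assumes der: "(\<Psi> has_vector_derivative P) (at 0)"
    and max: "\<And>t. cmod (\<Psi> t) \<le> cmod (\<Psi> 0)"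
  shows "Re (cnj (\<Psi> 0) * P) = 0"
proof (rule DERIV_local_max[where d=1])
  have "((\<lambda>t. cnj (\<Psi> 0) * \<Psi> t) has_vector_derivative cnj (\<Psi> 0) * P) (at 0)"
    using der by (rule has_vector_derivative_mult_right)
  then show "((\<lambda>t. Re (cnj (\<Psi> 0) * \<Psi> t)) has_real_derivative Re (cnj (\<Psi> 0) * P)) (at 0)"
    by (rule has_field_derivative_Re)
  show "\<forall>t. \<bar>0 - t\<bar> < 1 \<longrightarrow> Re (cnj (\<Psi> 0) * \<Psi> t) \<le> Re (cnj (\<Psi> 0) * \<Psi> 0)"
  proof (intro allI impI)
    fix t :: real
    have "Re (cnj (\<Psi> 0) * \<Psi> t) \<le> cmod (\<Psi> 0) * cmod (\<Psi> t)"
      using complex_Re_le_cmod[of "cnj (\<Psi> 0) * \<Psi> t"] by (simp add: norm_mult)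
    also have "\<dots> \<le> (cmod (\<Psi> 0))\<^sup>2"
      using max[of t] by (simp add: mult_left_mono power2_eq_square)
    also have "\<dots> = Re (cnj (\<Psi> 0) * \<Psi> 0)"
      using complex_norm_square[of "\<Psi> 0"] by (metis Re_complex_of_real mult.commute)
    finally show "Re (cnj (\<Psi> 0) * \<Psi> t) \<le> Re (cnj (\<Psi> 0) * \<Psi> 0)" .
  qed
qed simp

lemma Reals_valued_holomorphic_constant_on:
  assumes hol: "f holomorphic_on S" and S: "open S" "connected S"
    and real: "\<And>z. z \<in> S \<Longrightarrow> f z \<in> \<real>"
  shows "f constant_on S"
proof (rule ccontr)
  assume nc: "\<not> f constant_on S"
  then obtain z where z: "z \<in> S" unfolding constant_on_def by blast
  have "open (f ` S)" using open_mapping_thm[OF hol S S(1) order_refl nc] .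
  then obtain e where e: "e > 0" "ball (f z) e \<subseteq> f ` S"
    using z by (meson imageI open_contains_ball)
  then have "f z + \<i> * of_real (e / 2) \<in> f ` S" by (auto simp: dist_norm norm_mult)
  then obtain v where "v \<in> S" "f v = f z + \<i> * of_real (e / 2)" by auto
  then show False using real[OF z] real[of v] e(1) by (auto simp: complex_is_Real_iff)
qed

lemma deriv_eq_const_imp_affine:
  fixes f :: "complex \<Rightarrow> complex"
  assumes hol: "f holomorphic_on S" and S: "open S" "connected S"
    and der: "\<And>z. z \<in> S \<Longrightarrow> deriv f z = c"
  obtains a where "\<And>z. z \<in> S \<Longrightarrow> f z = a + c * z"
proof -
  have "(\<lambda>z. f z - c * z) constant_on S"
  proof (rule DERIV_zero_connected_constant_on[where K="{}"])
    show "continuous_on S (\<lambda>z. f z - c * z)"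
      using holomorphic_on_imp_continuous_on[OF hol] by (intro continuous_intros)
    show "\<forall>z\<in>S - {}. ((\<lambda>z. f z - c * z) has_field_derivative 0) (at z)"
    proof
      fix z assume "z \<in> S - {}"
      then have "(f has_field_derivative c) (at z)"
        using holomorphic_derivI[OF hol S(1)] der by force
      then show "((\<lambda>z. f z - c * z) has_field_derivative 0) (at z)"
        by (auto intro!: derivative_eq_intros)
    qed
  qed (use S in auto)
  then obtain a where a: "\<And>z. z \<in> S \<Longrightarrow> f z - c * z = a" by (auto simp: constant_on_def)
  show ?thesis
  proof (rule that)
    show "f z = a + c * z" if "z \<in> S" for z using a[OF that] by (simp add: diff_eq_eq)
  qed
qed

lemma Schwarz_Lemma_odd_part:
  fixes f :: "complex \<Rightarrow> complex"
  assumes hol: "f holomorphic_on ball 0 1"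
    and diam: "\<And>u v. u \<in> ball 0 1 \<Longrightarrow> v \<in> ball 0 1 \<Longrightarrow> cmod (f u - f v) \<le> 2"
  shows "cmod (deriv f 0) \<le> 1"
    and "cmod (deriv f 0) = 1 \<Longrightarrow> z \<in> ball 0 1 \<Longrightarrow> f z - f (- z) = 2 * deriv f 0 * z"
proof -
  define g where "g z = (f z - f (- z)) / 2" for z
  have "(\<lambda>z. f (- z)) holomorphic_on ball 0 1"
    using holomorphic_on_ball_compose_mult[OF hol, of "-1"] by simp
  then have hol_g: "g holomorphic_on ball 0 1"
    unfolding g_def using hol by (intro holomorphic_intros) auto
  have g0: "g 0 = 0" by (simp add: g_def)
  have g_lt: "cmod (g z) < 1" if "cmod z < 1" for z
    using norm_diff_mult_le[OF hol diam, of "-1" z] that by (simp add: g_def norm_divide)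
  have df0: "(f has_field_derivative deriv f 0) (at (- 0))"
    using hol by (auto intro: holomorphic_derivI)
  have "(uminus has_field_derivative -1) (at (0::complex))"
    by (auto intro!: derivative_eq_intros)
  from DERIV_chain2[OF df0 this]
  have "(g has_field_derivative deriv f 0) (at 0)"
    unfolding g_def using df0 by (auto intro!: derivative_eq_intros)
  then have deriv_g: "deriv g 0 = deriv f 0" by (rule DERIV_imp_deriv)
  show "cmod (deriv f 0) \<le> 1"
    using Schwarz_Lemma(2)[OF hol_g g0 g_lt, of 0] deriv_g by simp
  show "f z - f (- z) = 2 * deriv f 0 * z"
    if unit: "cmod (deriv f 0) = 1" and z: "z \<in> ball 0 1"
  proof -
    obtain \<alpha> where \<alpha>: "\<And>z. cmod z < 1 \<Longrightarrow> g z = \<alpha> * z"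
      using Schwarz_Lemma(3)[OF hol_g g0 g_lt, of 0] unit deriv_g by auto
    have "((\<lambda>z. \<alpha> * z) has_field_derivative \<alpha>) (at 0)" by (auto intro!: derivative_eq_intros)
    then have "(g has_field_derivative \<alpha>) (at 0)"
      by (rule has_field_derivative_transform_within_open[where S="ball 0 1"]) (auto simp: \<alpha>)
    then have "\<alpha> = deriv f 0" using deriv_g by (simp add: DERIV_imp_deriv)
    then show ?thesis using \<alpha>[of z] z by (simp add: g_def field_simps)
  qed
qed

lemma cnj_mult_deriv_in_Reals:
  fixes f :: "complex \<Rightarrow> complex"
  assumes hol: "f holomorphic_on ball 0 1"
    and diam: "\<And>u v. u \<in> ball 0 1 \<Longrightarrow> v \<in> ball 0 1 \<Longrightarrow> cmod (f u - f v) \<le> 2"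
    and odd: "\<And>z. z \<in> ball 0 1 \<Longrightarrow> f z - f (- z) = 2 * deriv f 0 * z"
    and unit: "cmod (deriv f 0) = 1"
    and w: "w \<in> ball 0 1"
  shows "cnj (deriv f 0) * deriv f w \<in> \<real>"
proof (cases "w = 0")
  case True
  then show ?thesis by (simp add: complex_is_Real_iff)
next
  case False
  define c where "c = deriv f 0"
  define z where "z = - w"
  have z: "z \<in> ball 0 1" "z \<noteq> 0" using w False by (auto simp: z_def)
  define \<Phi> where "\<Phi> s = f z - f (- (exp (\<i> * s) * z))" for s
  have \<Phi>0: "\<Phi> 0 = 2 * c * z" using odd[OF z(1)] by (simp add: \<Phi>_def c_def)
  have bound: "cmod (\<Phi> (of_real t)) \<le> cmod (\<Phi> (of_real 0))" for t :: real
  proof -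
    have "cmod (\<Phi> (of_real t)) \<le> 2 * cmod z"
      using norm_diff_mult_le[OF hol diam, of "- exp (\<i> * of_real t)" z] z(1)
      by (simp add: \<Phi>_def)
    also have "\<dots> = cmod (\<Phi> (of_real 0))" using unit by (simp add: \<Phi>0 c_def norm_mult)
    finally show ?thesis .
  qed
  have der: "((\<lambda>t. \<Phi> (of_real t)) has_vector_derivative deriv f w * (\<i> * z)) (at 0)"
  proof -
    have df: "(f has_field_derivative deriv f w) (at (- (exp (\<i> * 0) * z)))"
      using holomorphic_derivI[OF hol open_ball w] by (simp add: z_def)
    have "((\<lambda>s. - (exp (\<i> * s) * z)) has_field_derivative - (\<i> * z)) (at 0)"
      by (auto intro!: derivative_eq_intros)
    from DERIV_chain2[OF df this]
    have "(\<Phi> has_field_derivative deriv f w * (\<i> * z)) (at (of_real 0))"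
      unfolding \<Phi>_def by (auto intro!: derivative_eq_intros)
    then show ?thesis by (rule has_vector_derivative_real_field)
  qed
  define x where "x = cnj c * deriv f w"
  have "Re (cnj (\<Phi> 0) * (deriv f w * (\<i> * z))) = 0"
    using Re_cnj_mult_vector_derivative_eq_0[OF der bound] by (simp only: of_real_0)
  moreover have
    "cnj (\<Phi> 0) * (deriv f w * (\<i> * z)) = of_real (2 * (cmod z)\<^sup>2) * (\<i> * x)"
    unfolding \<Phi>0 x_def of_real_mult complex_norm_square by (simp add: algebra_simps)
  ultimately have "(cmod z)\<^sup>2 * Im x = 0" by simp
  then have "Im x = 0" using z(2) by simp
  then show ?thesis by (simp add: complex_is_Real_iff x_def c_def)
qed

lemma deriv_eq_deriv_0_if_odd_part_extremal:
  fixes f :: "complex \<Rightarrow> complex"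
  assumes hol: "f holomorphic_on ball 0 1"
    and diam: "\<And>u v. u \<in> ball 0 1 \<Longrightarrow> v \<in> ball 0 1 \<Longrightarrow> cmod (f u - f v) \<le> 2"
    and odd: "\<And>z. z \<in> ball 0 1 \<Longrightarrow> f z - f (- z) = 2 * deriv f 0 * z"
    and unit: "cmod (deriv f 0) = 1"
    and w: "w \<in> ball 0 1"
  shows "deriv f w = deriv f 0"
proof -
  have "cnj (deriv f 0) * deriv f u \<in> \<real>" if "u \<in> ball 0 1" for u
    using cnj_mult_deriv_in_Reals hol diam odd unit that by blast
  then have "(\<lambda>u. cnj (deriv f 0) * deriv f u) constant_on ball 0 1"
    using hol
    by (intro Reals_valued_holomorphic_constant_on) (auto intro!: holomorphic_intros holomorphic_deriv)
  then obtain k where k: "\<And>u. u \<in> ball 0 1 \<Longrightarrow> cnj (deriv f 0) * deriv f u = k"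
    by (auto simp: constant_on_def)
  have "cnj (deriv f 0) * deriv f w = cnj (deriv f 0) * deriv f 0" using k[OF w] k[of 0] by simp
  then show ?thesis using unit by auto
qed

lemma deriv_eq_if_affine_on:
  fixes f :: "complex \<Rightarrow> complex"
  assumes "open S" "z \<in> S" and affine: "\<And>u. u \<in> S \<Longrightarrow> f u = a + c * u"
  shows "deriv f z = c"
proof -
  have "((\<lambda>u. a + c * u) has_field_derivative c) (at z)" by (auto intro!: derivative_eq_intros)
  then have "(f has_field_derivative c) (at z)"
    by (rule has_field_derivative_transform_within_open) (use assms in auto)
  then show ?thesis by (rule DERIV_imp_deriv)
qed

theorem theorem2:
  fixes f :: "complex \<Rightarrow> complex"
  assumes "f holomorphic_on ball 0 1"
    and "Diam (f ` ball 0 1) \<le> 2"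
  shows "cmod (deriv f 0) \<le> 1 \<and>
         (cmod (deriv f 0) = 1 \<longleftrightarrow>
           (\<exists>a c. cmod c = 1 \<and> (\<forall>z\<in>ball 0 1. f z = a + c * z)))"
proof -
  have diam: "\<And>u v. u \<in> ball 0 1 \<Longrightarrow> v \<in> ball 0 1 \<Longrightarrow> cmod (f u - f v) \<le> 2"
    using order.trans[OF norm_diff_le_Diam assms(2)] by simp
  have "cmod (deriv f 0) \<le> 1" using Schwarz_Lemma_odd_part(1) assms(1) diam by blast
  moreover have "\<exists>a c. cmod c = 1 \<and> (\<forall>z\<in>ball 0 1. f z = a + c * z)"
    if unit: "cmod (deriv f 0) = 1"
  proof -
    have odd: "\<And>z. z \<in> ball 0 1 \<Longrightarrow> f z - f (- z) = 2 * deriv f 0 * z"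
      using Schwarz_Lemma_odd_part(2) assms(1) diam unit by blast
    have "\<And>w. w \<in> ball 0 1 \<Longrightarrow> deriv f w = deriv f 0"
      using deriv_eq_deriv_0_if_odd_part_extremal assms(1) diam odd unit by blast
    then obtain a where "\<And>z. z \<in> ball 0 1 \<Longrightarrow> f z = a + deriv f 0 * z"
      using deriv_eq_const_imp_affine[OF assms(1) open_ball connected_ball] by blast
    then show ?thesis using unit by blast
  qed
  moreover have "cmod (deriv f 0) = 1" if "\<exists>a c. cmod c = 1 \<and> (\<forall>z\<in>ball 0 1. f z = a + c * z)"
    using that deriv_eq_if_affine_on[where S="ball 0 1" and z=0 and f=f] by force
  ultimately show ?thesis by blast
qed

end
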